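(* Let $n\ge1$, $a,b\in\mathbb{C}$, $\alpha_1,\dots,\alpha_n,\gamma\in\mathbb{C}$, and suppose $\gamma$ is not a negative integer. Then the series \[ F(\beta;x)=\prod_{k=1}^n x_{1k}^{\alpha_k}\left(\frac{b^{\gamma+1}}{\gamma+1}F_D\!\left(\gamma+1;-\alpha_1,\dots,-\alpha_n;\gamma+2;\frac{-x_{21}b}{x_{11}},\dots,\frac{-x_{2n}b}{x_{1n}}\right)-\frac{a^{\gamma+1}}{\gamma+1}F_D\!\left(\gamma+1;-\alpha_1,\dots,-\alpha_n;\gamma+2;\frac{-x_{21}a}{x_{11}},\dots,\frac{-x_{2n}a}{x_{1n}}\right)\right) \] is a (series) solution of the incomplete $\Delta_1\times\Delta_{n-1}$-hypergeometric system \[ \begin{cases} (\theta_{1i}+\theta_{2i}-\alpha_i)\bullet f=0, & 1\le i\le n,\\[2pt] \left(\sum_{i=1}^n\theta_{2i}+\gamma+1\right)\bullet f=[g(t,x)]_{t=a}^{t=b}, & \\[2pt] (\partial_{1i}\partial_{2j}-\partial_{1j}\partial_{2i})\bullet f=0, & 1\le i<j\le n, \end{cases} \] where $g(t,x)=t^{\gamma+1}\prod_{k=1}^n(x_{1k}+x_{2k}t)^{\alpha_k}$.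
   Context: Variables $x=(x_{ij})_{i=1,2;\,1\le j\le n}$, $\partial_{ij}=\partial/\partial x_{ij}$, $\theta_{ij}=x_{ij}\partial_{ij}$, $\beta=(\alpha_1,\dots,\alpha_n,-\gamma-1)$, $[g(t,x)]_{t=a}^{t=b}=g(b,x)-g(a,x)$ (with suitable branches of the powers). The Lauricella function of $n$ variables is \[ F_D(a,b_1,\dots,b_n,c;z_1,\dots,z_n)=\sum_{m_1,\dots,m_n\ge0}\frac{(a)_{m_1+\cdots+m_n}(b_1)_{m_1}\cdots(b_n)_{m_n}}{(c)_{m_1+\cdots+m_n}(1)_{m_1}\cdots(1)_{m_n}}z_1^{m_1}\cdots z_n^{m_n}, \] with $(s)_m=s(s+1)\cdots(s+m-1)$ the Pochhammer symbol. *)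

theory Defs
  imports "HOL-Analysis.Analysis"
begin

text \<open>Points x = (x_ij), i = 1,2, 1 <= j <= n, are represented as functions
  nat => nat => complex; only the entries with i in {1,2}, j in {1..n} matter.\<close>

definition lauricella_FD ::
  "nat \<Rightarrow> complex \<Rightarrow> (nat \<Rightarrow> complex) \<Rightarrow> complex \<Rightarrow> (nat \<Rightarrow> complex) \<Rightarrow> complex" where
  "lauricella_FD n a b c z =
     (\<Sum>\<^sub>\<infinity> m \<in> PiE {1..n} (\<lambda>_. UNIV).
        pochhammer a (\<Sum>k=1..n. m k) * (\<Prod>k=1..n. pochhammer (b k) (m k))
        / (pochhammer c (\<Sum>k=1..n. m k) * (\<Prod>k=1..n. pochhammer 1 (m k)))
        * (\<Prod>k=1..n. z k ^ m k))"

definition partial_x ::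
  "nat \<Rightarrow> nat \<Rightarrow> ((nat \<Rightarrow> nat \<Rightarrow> complex) \<Rightarrow> complex) \<Rightarrow> (nat \<Rightarrow> nat \<Rightarrow> complex) \<Rightarrow> complex" where
  "partial_x i j f x = deriv (\<lambda>z. f (x(i := (x i)(j := z)))) (x i j)"

definition theta_x ::
  "nat \<Rightarrow> nat \<Rightarrow> ((nat \<Rightarrow> nat \<Rightarrow> complex) \<Rightarrow> complex) \<Rightarrow> (nat \<Rightarrow> nat \<Rightarrow> complex) \<Rightarrow> complex" where
  "theta_x i j f x = x i j * partial_x i j f x"

text \<open>The series F(beta; x).  Powers are principal branches (complex powr).\<close>
definition F_series ::
  "nat \<Rightarrow> (nat \<Rightarrow> complex) \<Rightarrow> complex \<Rightarrow> complex \<Rightarrow> complex \<Rightarrow> (nat \<Rightarrow> nat \<Rightarrow> complex) \<Rightarrow> complex" where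
  "F_series n \<alpha> \<gamma> a b x =
     (\<Prod>k=1..n. x 1 k powr \<alpha> k) *
     (b powr (\<gamma> + 1) / (\<gamma> + 1) *
        lauricella_FD n (\<gamma> + 1) (\<lambda>k. - \<alpha> k) (\<gamma> + 2) (\<lambda>k. - x 2 k * b / x 1 k)
      - a powr (\<gamma> + 1) / (\<gamma> + 1) *
        lauricella_FD n (\<gamma> + 1) (\<lambda>k. - \<alpha> k) (\<gamma> + 2) (\<lambda>k. - x 2 k * a / x 1 k))"

text \<open>g(t,x) = t^(gamma+1) * prod_k (x_1k + x_2k t)^(alpha_k), where the branch of
  (x_1k + x_2k t)^(alpha_k) is fixed as x_1k^(alpha_k) * (1 + x_2k t / x_1k)^(alpha_k)
  (principal branches), i.e. the branch compatible with the prefactor of F.\<close>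
definition g_fun ::
  "nat \<Rightarrow> (nat \<Rightarrow> complex) \<Rightarrow> complex \<Rightarrow> complex \<Rightarrow> (nat \<Rightarrow> nat \<Rightarrow> complex) \<Rightarrow> complex" where
  "g_fun n \<alpha> \<gamma> t x =
     t powr (\<gamma> + 1) * (\<Prod>k=1..n. x 1 k powr \<alpha> k * (1 + x 2 k * t / x 1 k) powr \<alpha> k)"

end

theory Submission
  imports Defs "HOL-Complex_Analysis.Complex_Analysis"
begin

text \<open>Writing \<open>u_k(t) = -x_2k t / x_1k\<close>, the series is
  \<open>F = (\<Prod>_k x_1k^\<alpha>_k) [t^(\<gamma>+1) / (\<gamma>+1) F_D(\<gamma>+1; -\<alpha>; \<gamma>+2; u(t))]_{t=a}^{t=b}\<close>.
  The Lauricella series converges absolutely on the unit polydisc and can be differentiated termwise,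
  so every partial derivative of \<open>F\<close> has the same shape with a shifted coefficient sequence.
  The homogeneity equations hold because \<open>F\<close> is \<open>\<Prod>_k x_1k^\<alpha>_k\<close> times a function of the ratios
  \<open>x_2k / x_1k\<close>. The other two equations reduce to identities for \<open>F_D\<close> that hold coefficientwise:
  the Euler identity \<open>(\<Sum>_i u_i \<partial>_i + \<gamma> + 1) F_D = (\<gamma> + 1) \<Prod>_k (1 - u_k)^\<alpha>_k\<close>, because
  \<open>(\<gamma>+1)_N / (\<gamma>+2)_N = (\<gamma>+1) / (\<gamma>+1+N)\<close> and what remains is a product of binomial series; and
  the contiguity relation \<open>(u_i - u_j) \<partial>_i \<partial>_j F_D = \<alpha>_i \<partial>_j F_D - \<alpha>_j \<partial>_i F_D\<close>.\<close>

section \<open>Power series in several complex variables\<close>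

abbreviation multi_indices :: "nat \<Rightarrow> (nat \<Rightarrow> nat) set" where
  "multi_indices n \<equiv> PiE {1..n} (\<lambda>_. UNIV)"

definition mdeg :: "nat \<Rightarrow> (nat \<Rightarrow> nat) \<Rightarrow> nat" where
  "mdeg n m = (\<Sum>k=1..n. m k)"

definition mmonom :: "nat \<Rightarrow> (nat \<Rightarrow> complex) \<Rightarrow> (nat \<Rightarrow> nat) \<Rightarrow> complex" where
  "mmonom n u m = (\<Prod>k=1..n. u k ^ m k)"

definition mseries :: "nat \<Rightarrow> ((nat \<Rightarrow> nat) \<Rightarrow> complex) \<Rightarrow> (nat \<Rightarrow> complex) \<Rightarrow> complex" where
  "mseries n C u = (\<Sum>\<^sub>\<infinity>m\<in>multi_indices n. C m * mmonom n u m)"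

definition unit_polydisc :: "nat \<Rightarrow> (nat \<Rightarrow> complex) set" where
  "unit_polydisc n = {u. \<forall>k\<in>{1..n}. norm (u k) < 1}"

definition polydisc_summable :: "nat \<Rightarrow> ((nat \<Rightarrow> nat) \<Rightarrow> complex) \<Rightarrow> bool" where
  "polydisc_summable n C \<longleftrightarrow>
     (\<forall>\<rho>::real. 0 < \<rho> \<and> \<rho> < 1 \<longrightarrow> (\<lambda>m. norm (C m) * \<rho> ^ mdeg n m) summable_on multi_indices n)"

definition coeff_deriv :: "nat \<Rightarrow> ((nat \<Rightarrow> nat) \<Rightarrow> complex) \<Rightarrow> (nat \<Rightarrow> nat) \<Rightarrow> complex" where
  "coeff_deriv j C m = of_nat (m j + 1) * C (m(j := m j + 1))"

lemma multi_indices_upd: "m \<in> multi_indices n \<Longrightarrow> j \<in> {1..n} \<Longrightarrow> m(j := p) \<in> multi_indices n"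
  by (auto simp: PiE_iff extensional_def)

lemma prod_upd_remove:
  fixes n :: nat
  assumes "j \<in> {1..n}"
  shows "(\<Prod>k=1..n. g k ((m(j := p)) k)) = g j p * (\<Prod>k\<in>{1..n}-{j}. g k (m k))"
  using assms by (subst prod.remove[of _ j]) (auto intro!: prod.cong)

lemma mdeg_incr:
  assumes "j \<in> {1..n}"
  shows "mdeg n (m(j := m j + 1)) = Suc (mdeg n m)"
proof -
  have "mdeg n (m(j := m j + 1)) = m j + 1 + (\<Sum>k\<in>{1..n}-{j}. m k)"
    unfolding mdeg_def using assms by (subst sum.remove[of _ j]) (auto intro!: sum.cong)
  also have "\<dots> = Suc (mdeg n m)"
    unfolding mdeg_def using assms by (subst (2) sum.remove[of _ j]) auto
  finally show ?thesis .
qed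

lemma mdeg_ge: "j \<in> {1..n} \<Longrightarrow> m j \<le> mdeg n m"
  unfolding mdeg_def by (intro member_le_sum) auto

lemma mmonom_upd:
  "j \<in> {1..n} \<Longrightarrow> mmonom n (u(j := w)) m = w ^ m j * (\<Prod>k\<in>{1..n}-{j}. u k ^ m k)"
  unfolding mmonom_def by (subst prod.remove[of _ j]) (auto intro!: prod.cong)

lemma mmonom_remove:
  "j \<in> {1..n} \<Longrightarrow> mmonom n u m = u j ^ m j * (\<Prod>k\<in>{1..n}-{j}. u k ^ m k)"
  using mmonom_upd[of j n u "u j" m] by simp

lemma norm_mmonom_le:
  assumes "\<forall>k\<in>{1..n}. norm (u k) \<le> \<rho>"
  shows "norm (mmonom n u m) \<le> \<rho> ^ mdeg n m"
proof -
  have "norm (mmonom n u m) = (\<Prod>k=1..n. norm (u k) ^ m k)"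
    unfolding mmonom_def by (simp add: prod_norm[symmetric] norm_power)
  also have "\<dots> \<le> (\<Prod>k=1..n. \<rho> ^ m k)"
    using assms by (intro prod_mono) (simp add: power_mono)
  also have "\<dots> = \<rho> ^ mdeg n m"
    unfolding mdeg_def by (simp add: power_sum)
  finally show ?thesis .
qed

lemma unit_polydisc_bound:
  assumes "u \<in> unit_polydisc n"
  obtains \<rho> where "0 < \<rho>" "\<rho> < 1" "\<forall>k\<in>{1..n}. norm (u k) \<le> \<rho>"
proof
  define \<rho> where "\<rho> = Max (insert (1/2) ((\<lambda>k. norm (u k)) ` {1..n}))"
  show "\<rho> < 1"
    using assms unfolding \<rho>_def unit_polydisc_def by (subst Max_less_iff) auto
  have "1/2 \<le> \<rho>"
    unfolding \<rho>_def by (rule Max_ge) auto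
  then show "0 < \<rho>" by linarith
  show "\<forall>k\<in>{1..n}. norm (u k) \<le> \<rho>"
    unfolding \<rho>_def by (auto simp del: Max_insert intro!: Max_ge)
qed

lemma polydisc_summable_abs_summable:
  assumes "polydisc_summable n C" "u \<in> unit_polydisc n"
  shows "(\<lambda>m. norm (C m * mmonom n u m)) summable_on multi_indices n"
proof -
  obtain \<rho> where \<rho>: "0 < \<rho>" "\<rho> < 1" "\<forall>k\<in>{1..n}. norm (u k) \<le> \<rho>"
    using unit_polydisc_bound[OF assms(2)] .
  show ?thesis
  proof (rule summable_on_comparison_test)
    show "(\<lambda>m. norm (C m) * \<rho> ^ mdeg n m) summable_on multi_indices n"
      using assms(1) \<rho> unfolding polydisc_summable_def by blast
    show "norm (C m * mmonom n u m) \<le> norm (C m) * \<rho> ^ mdeg n m" for m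
      unfolding norm_mult by (intro mult_left_mono norm_mmonom_le \<rho>) auto
  qed simp
qed

lemma polydisc_summable_summable:
  "polydisc_summable n C \<Longrightarrow> u \<in> unit_polydisc n \<Longrightarrow>
     (\<lambda>m. C m * mmonom n u m) summable_on multi_indices n"
  by (rule abs_summable_summable) (rule polydisc_summable_abs_summable)

lemma linear_times_power_bound:
  fixes \<rho> \<rho>' :: real
  assumes "0 < \<rho>" "\<rho> < \<rho>'"
  obtains K where "\<And>N::nat. of_nat N * \<rho> ^ N \<le> K * \<rho>' ^ N"
proof
  define \<delta> where "\<delta> = \<rho>' / \<rho> - 1"
  have \<delta>: "\<delta> > 0" using assms unfolding \<delta>_def by (simp add: field_simps)
  fix N :: nat
  have "of_nat N * \<delta> \<le> (1 + \<delta>) ^ N"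
    using Bernoulli_inequality[of \<delta> N] \<delta> by simp
  then have "of_nat N * \<delta> * \<rho> ^ N \<le> (\<rho>' / \<rho>) ^ N * \<rho> ^ N"
    using assms unfolding \<delta>_def by (intro mult_right_mono) auto
  also have "\<dots> = \<rho>' ^ N"
    using assms by (simp add: power_divide)
  finally show "of_nat N * \<rho> ^ N \<le> (1 / \<delta>) * \<rho>' ^ N"
    using \<delta> by (simp add: field_simps)
qed

text \<open>Linear growth in the degree is absorbed by passing to a slightly larger radius.\<close>
lemma polydisc_summable_degree_bound:
  assumes C: "polydisc_summable n C" and B: "0 \<le> B"
    and le: "\<And>m. m \<in> multi_indices n \<Longrightarrow> norm (D m) \<le> B * (1 + real (mdeg n m)) * norm (C m)"
  shows "polydisc_summable n D"
  unfolding polydisc_summable_def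
proof (intro allI impI)
  fix \<rho> :: real assume \<rho>: "0 < \<rho> \<and> \<rho> < 1"
  define \<rho>' where "\<rho>' = (1 + \<rho>) / 2"
  have \<rho>': "\<rho> < \<rho>'" "\<rho>' < 1" using \<rho> by (auto simp: \<rho>'_def)
  obtain K where K: "\<And>N::nat. of_nat N * \<rho> ^ N \<le> K * \<rho>' ^ N"
    using linear_times_power_bound[of \<rho> \<rho>'] \<rho> \<rho>' by auto
  have "(\<lambda>m. B * (1 + K) * (norm (C m) * \<rho>' ^ mdeg n m)) summable_on multi_indices n"
    using C \<rho> \<rho>' unfolding polydisc_summable_def by (intro summable_on_cmult_right) auto
  then show "(\<lambda>m. norm (D m) * \<rho> ^ mdeg n m) summable_on multi_indices n"
  proof (rule summable_on_comparison_test)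
    fix m assume m: "m \<in> multi_indices n"
    have "\<rho> ^ mdeg n m \<le> \<rho>' ^ mdeg n m"
      using \<rho> \<rho>' by (intro power_mono) auto
    then have deg: "(1 + real (mdeg n m)) * \<rho> ^ mdeg n m \<le> (1 + K) * \<rho>' ^ mdeg n m"
      using K[of "mdeg n m"] by (simp add: algebra_simps)
    have "norm (D m) * \<rho> ^ mdeg n m \<le> B * (1 + real (mdeg n m)) * norm (C m) * \<rho> ^ mdeg n m"
      using le[OF m] \<rho> by (intro mult_right_mono) auto
    also have "\<dots> = B * norm (C m) * ((1 + real (mdeg n m)) * \<rho> ^ mdeg n m)"
      by (simp add: mult_ac)
    also have "\<dots> \<le> B * norm (C m) * ((1 + K) * \<rho>' ^ mdeg n m)"
      using deg B by (intro mult_left_mono) auto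
    finally show "norm (D m) * \<rho> ^ mdeg n m \<le> B * (1 + K) * (norm (C m) * \<rho>' ^ mdeg n m)"
      by (simp add: mult_ac)
    show "0 \<le> norm (D m) * \<rho> ^ mdeg n m"
      using \<rho> by simp
  qed
qed

lemma polydisc_summable_add:
  assumes "polydisc_summable n C" "polydisc_summable n D"
  shows "polydisc_summable n (\<lambda>m. C m + D m)"
  unfolding polydisc_summable_def
proof (intro allI impI)
  fix \<rho> :: real assume \<rho>: "0 < \<rho> \<and> \<rho> < 1"
  have "(\<lambda>m. norm (C m) * \<rho> ^ mdeg n m + norm (D m) * \<rho> ^ mdeg n m) summable_on multi_indices n"
    using assms \<rho> unfolding polydisc_summable_def by (intro summable_on_add) blast+
  then show "(\<lambda>m. norm (C m + D m) * \<rho> ^ mdeg n m) summable_on multi_indices n"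
    by (rule summable_on_comparison_test)
       (use \<rho> in \<open>auto simp: distrib_right[symmetric] intro!: mult_right_mono norm_triangle_ineq\<close>)
qed

lemma polydisc_summable_sum:
  "finite I \<Longrightarrow> (\<And>i. i \<in> I \<Longrightarrow> polydisc_summable n (C i)) \<Longrightarrow>
     polydisc_summable n (\<lambda>m. \<Sum>i\<in>I. C i m)"
  by (induction I rule: finite_induct)
     (auto intro!: polydisc_summable_add, simp add: polydisc_summable_def)

lemma polydisc_summable_cmult:
  assumes "polydisc_summable n C"
  shows "polydisc_summable n (\<lambda>m. c * C m)"
proof (rule polydisc_summable_degree_bound[OF assms, of "norm c"])
  fix m
  have "norm c * 1 \<le> norm c * (1 + real (mdeg n m))"
    by (intro mult_left_mono) auto
  then show "norm (c * C m) \<le> norm c * (1 + real (mdeg n m)) * norm (C m)"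
    unfolding norm_mult by (intro mult_right_mono) auto
qed simp

lemma polydisc_summable_mult_index:
  assumes "polydisc_summable n C" "j \<in> {1..n}"
  shows "polydisc_summable n (\<lambda>m. of_nat (m j) * C m)"
proof (rule polydisc_summable_degree_bound[OF assms(1), of 1])
  fix m
  have "real (m j) \<le> 1 + real (mdeg n m)"
    using mdeg_ge[OF assms(2), of m] by simp
  then show "norm (of_nat (m j) * C m) \<le> 1 * (1 + real (mdeg n m)) * norm (C m)"
    by (simp add: norm_mult mult_right_mono)
qed simp

lemma polydisc_summable_mult_mdeg:
  "polydisc_summable n C \<Longrightarrow> polydisc_summable n (\<lambda>m. of_nat (mdeg n m) * C m)"
  by (rule polydisc_summable_degree_bound[of n C 1]) (auto simp: norm_mult intro!: mult_right_mono)

lemma polydisc_summable_shift: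
  assumes C: "polydisc_summable n C" and j: "j \<in> {1..n}"
  shows "polydisc_summable n (\<lambda>m. C (m(j := m j + 1)))"
  unfolding polydisc_summable_def
proof (intro allI impI)
  fix \<rho> :: real assume \<rho>: "0 < \<rho> \<and> \<rho> < 1"
  define h where "h m = m(j := m j + 1)" for m :: "nat \<Rightarrow> nat"
  have "inj_on h (multi_indices n)"
  proof (rule inj_onI)
    fix m m' assume "h m = h m'"
    then show "m = m'"
      unfolding h_def by (metis fun_upd_other fun_upd_same add_right_cancel ext)
  qed
  have "(\<lambda>m. norm (C m) * \<rho> ^ mdeg n m) summable_on multi_indices n"
    using C \<rho> unfolding polydisc_summable_def by blast
  then have "(\<lambda>m. norm (C m) * \<rho> ^ mdeg n m) summable_on h ` multi_indices n"
    by (rule summable_on_subset_banach) (use j in \<open>auto simp: h_def intro: multi_indices_upd\<close>)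
  then have "(\<lambda>m. norm (C (h m)) * \<rho> ^ mdeg n (h m)) summable_on multi_indices n"
    unfolding summable_on_reindex[OF \<open>inj_on h (multi_indices n)\<close>] o_def .
  then have "(\<lambda>m. inverse \<rho> * (norm (C (h m)) * \<rho> ^ mdeg n (h m))) summable_on multi_indices n"
    by (rule summable_on_cmult_right)
  moreover have "mdeg n (h m) = Suc (mdeg n m)" for m
    unfolding h_def by (rule mdeg_incr[OF j])
  ultimately have "(\<lambda>m. norm (C (h m)) * \<rho> ^ mdeg n m) summable_on multi_indices n"
    using \<rho> by (simp add: field_simps)
  then show "(\<lambda>m. norm (C (m(j := m j + 1))) * \<rho> ^ mdeg n m) summable_on multi_indices n"
    by (simp add: h_def)
qed

lemma polydisc_summable_coeff_deriv:
  assumes "polydisc_summable n C" "j \<in> {1..n}"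
  shows "polydisc_summable n (coeff_deriv j C)"
proof (rule polydisc_summable_degree_bound[OF polydisc_summable_shift[OF assms], of 1])
  fix m
  have "real (m j + 1) \<le> 1 + real (mdeg n m)"
    using mdeg_ge[OF assms(2), of m] by simp
  then show "norm (coeff_deriv j C m) \<le> 1 * (1 + real (mdeg n m)) * norm (C (m(j := m j + 1)))"
    unfolding coeff_deriv_def norm_mult norm_of_nat by (intro mult_right_mono) auto
qed simp

lemma coeff_deriv_commute: "i \<noteq> j \<Longrightarrow> coeff_deriv i (coeff_deriv j C) = coeff_deriv j (coeff_deriv i C)"
  by (auto simp: coeff_deriv_def fun_eq_iff fun_upd_twist)

lemma infsum_shift_multi_index:
  assumes j: "j \<in> {1..n}" and vanish: "\<And>m. m \<in> multi_indices n \<Longrightarrow> m j = 0 \<Longrightarrow> f m = 0"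
  shows "(\<Sum>\<^sub>\<infinity>m\<in>multi_indices n. f (m(j := m j + 1))) = (\<Sum>\<^sub>\<infinity>m\<in>multi_indices n. f m)"
proof -
  have "bij_betw (\<lambda>m. m(j := m j + 1)) (multi_indices n) {m \<in> multi_indices n. m j \<noteq> 0}"
  proof (rule bij_betw_byWitness[where f' = "\<lambda>m. m(j := m j - 1)"])
    show "(\<lambda>m. m(j := m j + 1)) ` multi_indices n \<subseteq> {m \<in> multi_indices n. m j \<noteq> 0}"
      using j by (auto intro: multi_indices_upd)
    show "(\<lambda>m. m(j := m j - 1)) ` {m \<in> multi_indices n. m j \<noteq> 0} \<subseteq> multi_indices n"
      using j by (auto intro: multi_indices_upd)
  qed auto
  then have "(\<Sum>\<^sub>\<infinity>m\<in>multi_indices n. f (m(j := m j + 1)))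
             = (\<Sum>\<^sub>\<infinity>m\<in>{m \<in> multi_indices n. m j \<noteq> 0}. f m)"
    by (rule infsum_reindex_bij_betw)
  also have "\<dots> = (\<Sum>\<^sub>\<infinity>m\<in>multi_indices n. f m)"
    by (rule infsum_cong_neutral) (auto simp: vanish)
  finally show ?thesis .
qed

lemma mseries_cong: "(\<And>m. m \<in> multi_indices n \<Longrightarrow> C m = D m) \<Longrightarrow> mseries n C u = mseries n D u"
  unfolding mseries_def by (rule infsum_cong) simp

lemma mseries_cmult: "mseries n (\<lambda>m. c * C m) u = c * mseries n C u"
  unfolding mseries_def by (simp add: mult.assoc infsum_cmult_right')

lemma mseries_add:
  "polydisc_summable n C \<Longrightarrow> polydisc_summable n D \<Longrightarrow> u \<in> unit_polydisc n \<Longrightarrow>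
     mseries n (\<lambda>m. C m + D m) u = mseries n C u + mseries n D u"
  unfolding mseries_def distrib_right by (intro infsum_add polydisc_summable_summable)

lemma mseries_diff:
  assumes "polydisc_summable n C" "polydisc_summable n D" "u \<in> unit_polydisc n"
  shows "mseries n (\<lambda>m. C m - D m) u = mseries n C u - mseries n D u"
proof -
  have "mseries n (\<lambda>m. C m + (-1) * D m) u = mseries n C u + mseries n (\<lambda>m. (-1) * D m) u"
    using assms by (intro mseries_add polydisc_summable_cmult)
  then show ?thesis
    by (simp add: mseries_cmult[of n "-1", simplified])
qed

lemma mseries_sum:
  assumes "finite I" "\<And>i. i \<in> I \<Longrightarrow> polydisc_summable n (C i)" "u \<in> unit_polydisc n"
  shows "mseries n (\<lambda>m. \<Sum>i\<in>I. C i m) u = (\<Sum>i\<in>I. mseries n (C i) u)"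
  using assms(1,2)
proof (induction I rule: finite_induct)
  case empty
  then show ?case by (simp add: mseries_def)
next
  case (insert i I)
  then have "mseries n (\<lambda>m. C i m + (\<Sum>i\<in>I. C i m)) u = mseries n (C i) u + mseries n (\<lambda>m. \<Sum>i\<in>I. C i m) u"
    by (intro mseries_add polydisc_summable_sum assms(3)) auto
  with insert show ?case by simp
qed

lemma mseries_euler_operator:
  assumes "j \<in> {1..n}"
  shows "u j * mseries n (coeff_deriv j C) u = mseries n (\<lambda>m. of_nat (m j) * C m) u"
proof -
  have "u j * mseries n (coeff_deriv j C) u = (\<Sum>\<^sub>\<infinity>m\<in>multi_indices n. u j * (coeff_deriv j C m * mmonom n u m))"
    unfolding mseries_def by (simp add: infsum_cmult_right')
  also have "\<dots> = (\<Sum>\<^sub>\<infinity>m\<in>multi_indices n. (\<lambda>m. of_nat (m j) * C m * mmonom n u m) (m(j := m j + 1)))"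
  proof (rule infsum_cong)
    fix m
    have "(\<Prod>k\<in>{1..n}-{j}. u k ^ (m(j := m j + 1)) k) = (\<Prod>k\<in>{1..n}-{j}. u k ^ m k)"
      by (intro prod.cong) auto
    then show "u j * (coeff_deriv j C m * mmonom n u m) = (\<lambda>m. of_nat (m j) * C m * mmonom n u m) (m(j := m j + 1))"
      unfolding coeff_deriv_def mmonom_remove[OF assms, of u] by (simp add: mult_ac)
  qed
  also have "\<dots> = mseries n (\<lambda>m. of_nat (m j) * C m) u"
    unfolding mseries_def by (rule infsum_shift_multi_index[OF assms]) simp
  finally show ?thesis .
qed

text \<open>On a closed disc around \<open>u j\<close> the terms are dominated by \<open>norm (C m) * \<rho> ^ mdeg n m\<close> for a
  fixed \<open>\<rho> < 1\<close>, so the partial sums converge uniformly and the limit of their derivatives is the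
  derivative of the limit.\<close>
lemma has_field_derivative_mseries:
  assumes C: "polydisc_summable n C" and u: "u \<in> unit_polydisc n" and j: "j \<in> {1..n}"
  shows "((\<lambda>z. mseries n C (u(j := z))) has_field_derivative mseries n (coeff_deriv j C) u) (at (u j))"
proof -
  obtain \<rho>0 where \<rho>0: "0 < \<rho>0" "\<rho>0 < 1" "\<forall>k\<in>{1..n}. norm (u k) \<le> \<rho>0"
    using unit_polydisc_bound[OF u] .
  define r where "r = (1 - \<rho>0) / 2"
  define \<rho> where "\<rho> = \<rho>0 + r"
  have r: "0 < r" "0 < \<rho>" "\<rho> < 1"
    using \<rho>0(1,2) unfolding r_def \<rho>_def by (auto simp: field_simps)
  define R where "R m = (\<Prod>k\<in>{1..n}-{j}. u k ^ m k)" for m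
  define f where "f m w = C m * (w ^ m j * R m)" for m w
  define f' where "f' m w = C m * (of_nat (m j) * w ^ (m j - 1) * R m)" for m w
  have f_mmonom: "f m w = C m * mmonom n (u(j := w)) m" for m w
    unfolding f_def R_def using mmonom_upd[OF j] by simp
  have bound: "norm (f m w) \<le> norm (C m) * \<rho> ^ mdeg n m" if "w \<in> cball (u j) r" for m w
  proof -
    have "norm w \<le> norm (u j) + r"
      using that norm_triangle_sub[of w "u j"] by (auto simp: dist_norm norm_minus_commute)
    then have "\<forall>k\<in>{1..n}. norm ((u(j := w)) k) \<le> \<rho>"
      using \<rho>0(3) j r by (auto simp: \<rho>_def)
    then show ?thesis
      unfolding f_mmonom norm_mult by (intro mult_left_mono norm_mmonom_le) auto
  qed
  have ulim: "uniform_limit (cball (u j) r) (\<lambda>X w. \<Sum>m\<in>X. f m w) (\<lambda>w. \<Sum>\<^sub>\<infinity>m\<in>multi_indices n. f m w)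
          (finite_subsets_at_top (multi_indices n))"
    by (rule Weierstrass_m_test_general) (use bound C r in \<open>auto simp: polydisc_summable_def\<close>)
  have derivs: "\<forall>\<^sub>F X in finite_subsets_at_top (multi_indices n).
      continuous_on (cball (u j) r) (\<lambda>w. \<Sum>m\<in>X. f m w) \<and>
      (\<forall>w\<in>ball (u j) r. ((\<lambda>w. \<Sum>m\<in>X. f m w) has_field_derivative (\<Sum>m\<in>X. f' m w)) (at w))"
    unfolding f_def f'_def
    by (intro always_eventually allI conjI ballI continuous_intros DERIV_sum)
       (auto intro!: derivative_eq_intros)
  obtain g' where g': "\<And>w. w \<in> ball (u j) r \<Longrightarrow>
      ((\<lambda>w. \<Sum>\<^sub>\<infinity>m\<in>multi_indices n. f m w) has_field_derivative g' w) (at w) \<and>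
      ((\<lambda>X. \<Sum>m\<in>X. f' m w) \<longlongrightarrow> g' w) (finite_subsets_at_top (multi_indices n))"
    using has_complex_derivative_uniform_limit[OF derivs ulim _ r(1)] by auto
  have uj: "u j \<in> ball (u j) r"
    using r by simp
  have "((\<lambda>m. f' m (u j)) has_sum g' (u j)) (multi_indices n)"
    using g'[OF uj] unfolding has_sum_def by blast
  then have "g' (u j) = (\<Sum>\<^sub>\<infinity>m\<in>multi_indices n. f' m (u j))"
    by (simp add: infsumI)
  also have "\<dots> = (\<Sum>\<^sub>\<infinity>m\<in>multi_indices n. f' (m(j := m j + 1)) (u j))"
    by (rule infsum_shift_multi_index[symmetric, OF j]) (simp add: f'_def)
  also have "\<dots> = mseries n (coeff_deriv j C) u"
    unfolding mseries_def
  proof (rule infsum_cong)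
    fix m
    have "R (m(j := m j + 1)) = R m"
      unfolding R_def by (intro prod.cong) auto
    then show "f' (m(j := m j + 1)) (u j) = coeff_deriv j C m * mmonom n u m"
      unfolding f'_def coeff_deriv_def mmonom_remove[OF j, of u m] by (simp add: mult_ac R_def)
  qed
  finally have "g' (u j) = mseries n (coeff_deriv j C) u" .
  moreover have "(\<lambda>z. mseries n C (u(j := z))) = (\<lambda>w. \<Sum>\<^sub>\<infinity>m\<in>multi_indices n. f m w)"
    by (simp add: mseries_def f_mmonom)
  ultimately show ?thesis
    using g'[OF uj] by simp
qed

section \<open>The Lauricella function \<open>F\<^sub>D(\<gamma>+1; -\<alpha>; \<gamma>+2; u)\<close>\<close>

definition fd_ratio :: "complex \<Rightarrow> nat \<Rightarrow> complex" where
  "fd_ratio \<gamma> N = pochhammer (\<gamma> + 1) N / pochhammer (\<gamma> + 2) N"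

definition binom_coeff :: "complex \<Rightarrow> nat \<Rightarrow> complex" where
  "binom_coeff a p = pochhammer (- a) p / pochhammer 1 p"

definition binom_coeff_prod :: "nat \<Rightarrow> (nat \<Rightarrow> complex) \<Rightarrow> (nat \<Rightarrow> nat) \<Rightarrow> complex" where
  "binom_coeff_prod n \<alpha> m = (\<Prod>k=1..n. binom_coeff (\<alpha> k) (m k))"

definition fd_coeff :: "nat \<Rightarrow> (nat \<Rightarrow> complex) \<Rightarrow> complex \<Rightarrow> (nat \<Rightarrow> nat) \<Rightarrow> complex" where
  "fd_coeff n \<alpha> \<gamma> m = fd_ratio \<gamma> (mdeg n m) * binom_coeff_prod n \<alpha> m"

lemma lauricella_FD_eq_mseries:
  "lauricella_FD n (\<gamma> + 1) (\<lambda>k. - \<alpha> k) (\<gamma> + 2) u = mseries n (fd_coeff n \<alpha> \<gamma>) u"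
  unfolding lauricella_FD_def mseries_def
  by (intro infsum_cong)
     (simp add: fd_coeff_def fd_ratio_def binom_coeff_prod_def binom_coeff_def mmonom_def mdeg_def prod_dividef)

lemma fd_ratio_eq:
  assumes "\<forall>k::nat. \<gamma> \<noteq> - of_nat (Suc k)"
  shows "(\<gamma> + 1 + of_nat N) * fd_ratio \<gamma> N = \<gamma> + 1"
proof -
  have "pochhammer (\<gamma> + 2) N \<noteq> 0"
  proof
    assume "pochhammer (\<gamma> + 2) N = 0"
    then obtain k where "\<gamma> + 2 = - of_nat k"
      unfolding pochhammer_eq_0_iff by blast
    then have "\<gamma> = - of_nat (Suc (Suc k))"
      by (simp add: algebra_simps)
    with assms show False by blast
  qed
  moreover have "(\<gamma> + 1) * pochhammer (\<gamma> + 2) N = (\<gamma> + 1 + of_nat N) * pochhammer (\<gamma> + 1) N"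
    by (metis pochhammer_rec pochhammer_rec' add.assoc one_add_one)
  ultimately show ?thesis
    unfolding fd_ratio_def by (simp add: field_simps)
qed

lemma fd_ratio_bounded:
  assumes "\<forall>k::nat. \<gamma> \<noteq> - of_nat (Suc k)"
  obtains K where "\<And>N. norm (fd_ratio \<gamma> N) \<le> K"
proof -
  have "\<gamma> + 1 + of_nat N \<noteq> 0" for N
    using assms by (metis add.commute add.left_commute add_eq_0_iff of_nat_Suc)
  then have "fd_ratio \<gamma> = (\<lambda>N. (\<gamma> + 1) / (\<gamma> + 1 + of_nat N))"
    using fd_ratio_eq[OF assms] by (intro ext) (simp add: field_simps)
  moreover have "(\<lambda>N. (\<gamma> + 1) / (\<gamma> + 1 + of_nat N)) \<longlonglongrightarrow> 0"
    by (intro tendsto_divide_0[OF tendsto_const] tendsto_add_filterlim_at_infinity[OF tendsto_const]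
        tendsto_of_nat)
  ultimately have "fd_ratio \<gamma> \<longlonglongrightarrow> 0"
    by simp
  then have "Bseq (fd_ratio \<gamma>)"
    by (intro convergent_imp_Bseq convergentI)
  then show ?thesis
    using that by (meson BseqE less_imp_le)
qed

lemma binom_coeff_eq_gchoose: "binom_coeff a p = (-1) ^ p * (a gchoose p)"
  unfolding binom_coeff_def gbinomial_pochhammer pochhammer_fact
  by (simp add: power_mult_distrib[symmetric])

lemma binom_coeff_Suc: "of_nat (p + 1) * binom_coeff a (p + 1) = (of_nat p - a) * binom_coeff a p"
proof -
  have "(1 + of_nat p :: complex) \<noteq> 0"
    by (metis of_nat_Suc of_nat_eq_0_iff nat.distinct(1) add.commute)
  then have "of_nat (p + 1) * binom_coeff a (p + 1)
             = (- a + of_nat p) * pochhammer (- a) p / pochhammer 1 p"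
    unfolding binom_coeff_def Suc_eq_plus1[symmetric] pochhammer_rec' by simp
  then show ?thesis
    unfolding binom_coeff_def by simp
qed

lemma binom_coeff_abs_summable:
  "norm z < 1 \<Longrightarrow> summable (\<lambda>p. norm (binom_coeff a p * z ^ p))"
  using abs_summable_in_conv_radius[of z "\<lambda>p. a gchoose p"]
  by (simp add: conv_radius_gchoose binom_coeff_eq_gchoose norm_mult norm_power)

lemma binom_coeff_has_sum:
  assumes "norm z < 1"
  shows "((\<lambda>p. binom_coeff a p * z ^ p) has_sum (1 - z) powr a) UNIV"
proof (rule norm_summable_imp_has_sum[OF binom_coeff_abs_summable[OF assms]])
  have "(\<lambda>p. (a gchoose p) * (-z) ^ p) sums (1 + (-z)) powr a"
    using assms by (intro gen_binomial_complex) simp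
  moreover have "binom_coeff a p * z ^ p = (a gchoose p) * (-z) ^ p" for p
    by (simp add: binom_coeff_eq_gchoose power_minus')
  ultimately show "(\<lambda>p. binom_coeff a p * z ^ p) sums (1 - z) powr a"
    by simp
qed

lemma mseries_binom_coeff_prod:
  assumes "u \<in> unit_polydisc n"
  shows "mseries n (binom_coeff_prod n \<alpha>) u = (\<Prod>k=1..n. (1 - u k) powr \<alpha> k)"
proof -
  have u: "norm (u k) < 1" if "k \<in> {1..n}" for k
    using assms that by (auto simp: unit_polydisc_def)
  have "mseries n (binom_coeff_prod n \<alpha>) u
        = (\<Sum>\<^sub>\<infinity>m\<in>multi_indices n. \<Prod>k\<in>{1..n}. binom_coeff (\<alpha> k) (m k) * u k ^ m k)"
    unfolding mseries_def binom_coeff_prod_def mmonom_def by (simp add: prod.distrib)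
  also have "\<dots> = (\<Prod>k\<in>{1..n}. \<Sum>\<^sub>\<infinity>p. binom_coeff (\<alpha> k) p * u k ^ p)"
    by (rule infsum_prod_PiE_abs)
       (use u in \<open>auto intro!: summable_nonneg_imp_summable_on binom_coeff_abs_summable\<close>)
  also have "\<dots> = (\<Prod>k=1..n. (1 - u k) powr \<alpha> k)"
    using u by (intro prod.cong infsumI binom_coeff_has_sum) auto
  finally show ?thesis .
qed

lemma polydisc_summable_fd_coeff:
  assumes "\<forall>k::nat. \<gamma> \<noteq> - of_nat (Suc k)"
  shows "polydisc_summable n (fd_coeff n \<alpha> \<gamma>)"
  unfolding polydisc_summable_def
proof (intro allI impI)
  fix \<rho> :: real assume \<rho>: "0 < \<rho> \<and> \<rho> < 1"
  obtain K where K: "\<And>N. norm (fd_ratio \<gamma> N) \<le> K"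
    using fd_ratio_bounded[OF assms] by blast
  define f where "f k p = norm (binom_coeff (\<alpha> k) p) * \<rho> ^ p" for k p
  have f_nonneg: "0 \<le> f k p" for k p
    using \<rho> by (simp add: f_def)
  have "Infinite_Set_Sum.abs_summable_on (f k) UNIV" for k
  proof (rule abs_summable_equivalent[THEN iffD1])
    have "summable (\<lambda>p. norm (binom_coeff (\<alpha> k) p * complex_of_real \<rho> ^ p))"
      using \<rho> by (intro binom_coeff_abs_summable) auto
    then have "summable (\<lambda>p. norm (f k p))"
      using \<rho> by (simp add: f_def norm_mult norm_power)
    then show "(\<lambda>p. norm (f k p)) summable_on UNIV"
      by (rule summable_nonneg_imp_summable_on) auto
  qed
  then have "Infinite_Set_Sum.abs_summable_on (\<lambda>m. \<Prod>k\<in>{1..n}. f k (m k)) (multi_indices n)"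
    by (intro abs_summable_on_prod_PiE) auto
  then have "(\<lambda>m. norm (\<Prod>k\<in>{1..n}. f k (m k))) summable_on multi_indices n"
    by (rule abs_summable_equivalent[THEN iffD2])
  then have "(\<lambda>m. K * (\<Prod>k\<in>{1..n}. f k (m k))) summable_on multi_indices n"
    using f_nonneg by (simp add: prod_nonneg summable_on_cmult_right)
  then show "(\<lambda>m. norm (fd_coeff n \<alpha> \<gamma> m) * \<rho> ^ mdeg n m) summable_on multi_indices n"
  proof (rule summable_on_comparison_test)
    fix m :: "nat \<Rightarrow> nat"
    have "norm (fd_coeff n \<alpha> \<gamma> m) * \<rho> ^ mdeg n m = norm (fd_ratio \<gamma> (mdeg n m)) * (\<Prod>k=1..n. f k (m k))"
      unfolding fd_coeff_def binom_coeff_prod_def f_def mdeg_def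
      by (simp add: norm_mult prod_norm[symmetric] power_sum prod.distrib mult_ac)
    then show "norm (fd_coeff n \<alpha> \<gamma> m) * \<rho> ^ mdeg n m \<le> K * (\<Prod>k\<in>{1..n}. f k (m k))"
      using K f_nonneg by (simp add: mult_right_mono prod_nonneg)
    show "0 \<le> norm (fd_coeff n \<alpha> \<gamma> m) * \<rho> ^ mdeg n m"
      using \<rho> by simp
  qed
qed

lemma coeff_deriv_fd_coeff:
  assumes "j \<in> {1..n}"
  shows "coeff_deriv j (fd_coeff n \<alpha> \<gamma>) m
         = fd_ratio \<gamma> (Suc (mdeg n m)) * ((of_nat (m j) - \<alpha> j) * binom_coeff_prod n \<alpha> m)"
proof -
  let ?R = "\<Prod>k\<in>{1..n}-{j}. binom_coeff (\<alpha> k) (m k)"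
  have "coeff_deriv j (fd_coeff n \<alpha> \<gamma>) m
        = fd_ratio \<gamma> (Suc (mdeg n m)) * (of_nat (m j + 1) * binom_coeff (\<alpha> j) (m j + 1) * ?R)"
    unfolding coeff_deriv_def fd_coeff_def mdeg_incr[OF assms] binom_coeff_prod_def
      prod_upd_remove[OF assms, of "\<lambda>k p. binom_coeff (\<alpha> k) p"] by (simp only: mult_ac)
  also have "\<dots> = fd_ratio \<gamma> (Suc (mdeg n m)) * ((of_nat (m j) - \<alpha> j) * binom_coeff_prod n \<alpha> m)"
    unfolding binom_coeff_Suc binom_coeff_prod_def using assms
    by (subst (2) prod.remove[of _ j]) (auto simp: mult_ac)
  finally show ?thesis .
qed

text \<open>Coefficientwise this is
  \<open>m_i (m_j - \<alpha>_j) - m_j (m_i - \<alpha>_i) = \<alpha>_i (m_j - \<alpha>_j) - \<alpha>_j (m_i - \<alpha>_i)\<close>.\<close>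
lemma lauricella_contiguity:
  assumes \<gamma>: "\<forall>k::nat. \<gamma> \<noteq> - of_nat (Suc k)" and u: "u \<in> unit_polydisc n"
    and ij: "i \<in> {1..n}" "j \<in> {1..n}" "i \<noteq> j"
  shows "\<alpha> i * mseries n (coeff_deriv j (fd_coeff n \<alpha> \<gamma>)) u - \<alpha> j * mseries n (coeff_deriv i (fd_coeff n \<alpha> \<gamma>)) u
         = (u i - u j) * mseries n (coeff_deriv i (coeff_deriv j (fd_coeff n \<alpha> \<gamma>))) u"
proof -
  let ?C = "fd_coeff n \<alpha> \<gamma>"
  have Ci: "polydisc_summable n (coeff_deriv i ?C)" and Cj: "polydisc_summable n (coeff_deriv j ?C)"
    using polydisc_summable_coeff_deriv polydisc_summable_fd_coeff[OF \<gamma>] ij by auto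
  have "(u i - u j) * mseries n (coeff_deriv i (coeff_deriv j ?C)) u
        = u i * mseries n (coeff_deriv i (coeff_deriv j ?C)) u - u j * mseries n (coeff_deriv j (coeff_deriv i ?C)) u"
    using coeff_deriv_commute[OF ij(3)] by (simp add: algebra_simps)
  also have "\<dots> = mseries n (\<lambda>m. of_nat (m i) * coeff_deriv j ?C m - of_nat (m j) * coeff_deriv i ?C m) u"
    using Ci Cj ij u
    by (simp add: mseries_euler_operator mseries_diff polydisc_summable_mult_index)
  also have "\<dots> = mseries n (\<lambda>m. \<alpha> i * coeff_deriv j ?C m - \<alpha> j * coeff_deriv i ?C m) u"
    using ij by (intro mseries_cong) (simp add: coeff_deriv_fd_coeff algebra_simps)
  also have "\<dots> = \<alpha> i * mseries n (coeff_deriv j ?C) u - \<alpha> j * mseries n (coeff_deriv i ?C) u"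
    using Ci Cj u by (simp add: mseries_diff polydisc_summable_cmult mseries_cmult)
  finally show ?thesis by simp
qed

lemma lauricella_euler:
  assumes \<gamma>: "\<forall>k::nat. \<gamma> \<noteq> - of_nat (Suc k)" and u: "u \<in> unit_polydisc n"
  shows "(\<Sum>i=1..n. u i * mseries n (coeff_deriv i (fd_coeff n \<alpha> \<gamma>)) u) + (\<gamma> + 1) * mseries n (fd_coeff n \<alpha> \<gamma>) u
         = (\<gamma> + 1) * (\<Prod>k=1..n. (1 - u k) powr \<alpha> k)"
proof -
  let ?C = "fd_coeff n \<alpha> \<gamma>"
  have C: "polydisc_summable n ?C"
    by (rule polydisc_summable_fd_coeff[OF \<gamma>])
  have "(\<Sum>i=1..n. u i * mseries n (coeff_deriv i ?C) u) = (\<Sum>i=1..n. mseries n (\<lambda>m. of_nat (m i) * ?C m) u)"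
    by (intro sum.cong) (simp_all add: mseries_euler_operator)
  also have "\<dots> = mseries n (\<lambda>m. \<Sum>i=1..n. of_nat (m i) * ?C m) u"
    using C u by (intro mseries_sum[symmetric] polydisc_summable_mult_index) auto
  also have "\<dots> = mseries n (\<lambda>m. of_nat (mdeg n m) * ?C m) u"
    by (intro mseries_cong) (simp add: mdeg_def sum_distrib_right)
  finally have "(\<Sum>i=1..n. u i * mseries n (coeff_deriv i ?C) u) + (\<gamma> + 1) * mseries n ?C u
      = mseries n (\<lambda>m. of_nat (mdeg n m) * ?C m + (\<gamma> + 1) * ?C m) u"
    using C u by (simp add: mseries_add polydisc_summable_mult_mdeg polydisc_summable_cmult mseries_cmult)
  also have "\<dots> = mseries n (\<lambda>m. (\<gamma> + 1) * binom_coeff_prod n \<alpha> m) u"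
  proof (intro mseries_cong)
    fix m
    have "of_nat (mdeg n m) * ?C m + (\<gamma> + 1) * ?C m
          = ((\<gamma> + 1 + of_nat (mdeg n m)) * fd_ratio \<gamma> (mdeg n m)) * binom_coeff_prod n \<alpha> m"
      unfolding fd_coeff_def by (simp add: algebra_simps)
    then show "of_nat (mdeg n m) * ?C m + (\<gamma> + 1) * ?C m = (\<gamma> + 1) * binom_coeff_prod n \<alpha> m"
      unfolding fd_ratio_eq[OF \<gamma>] .
  qed
  also have "\<dots> = (\<gamma> + 1) * (\<Prod>k=1..n. (1 - u k) powr \<alpha> k)"
    by (simp add: mseries_cmult mseries_binom_coeff_prod[OF u])
  finally show ?thesis .
qed

section \<open>The series solution\<close>

definition upd_entry ::
  "(nat \<Rightarrow> nat \<Rightarrow> complex) \<Rightarrow> nat \<Rightarrow> nat \<Rightarrow> complex \<Rightarrow> nat \<Rightarrow> nat \<Rightarrow> complex" where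
  "upd_entry x i j z = x(i := (x i)(j := z))"

lemma upd_entry_apply: "upd_entry x i j z i' k = (if i' = i \<and> k = j then z else x i' k)"
  by (simp add: upd_entry_def)

lemma upd_entry_self [simp]: "upd_entry x i j (x i j) = x"
  by (simp add: upd_entry_def)

lemma partial_x_eq_deriv_upd_entry: "partial_x i j f x = deriv (\<lambda>z. f (upd_entry x i j z)) (x i j)"
  unfolding partial_x_def upd_entry_def ..

lemma field_differentiable_upd_entry: "(\<lambda>z. upd_entry x i j z i' k) field_differentiable at w"
  unfolding upd_entry_apply by (cases "i' = i \<and> k = j") auto

definition sol_domain :: "nat \<Rightarrow> complex \<Rightarrow> complex \<Rightarrow> (nat \<Rightarrow> nat \<Rightarrow> complex) set" where
  "sol_domain n a b = {x. \<forall>k\<in>{1..n}. x 1 k \<notin> \<real>\<^sub>\<le>\<^sub>0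
                          \<and> cmod (x 2 k * a) < cmod (x 1 k) \<and> cmod (x 2 k * b) < cmod (x 1 k)}"

lemma sol_domain_not_nonpos: "x \<in> sol_domain n a b \<Longrightarrow> k \<in> {1..n} \<Longrightarrow> x 1 k \<notin> \<real>\<^sub>\<le>\<^sub>0"
  unfolding sol_domain_def by auto

lemma sol_domain_nonzero: "x \<in> sol_domain n a b \<Longrightarrow> k \<in> {1..n} \<Longrightarrow> x 1 k \<noteq> 0"
  using sol_domain_not_nonpos nonpos_Reals_zero_I by metis

lemma open_sol_domain_line: "open {z. upd_entry x i j z \<in> sol_domain n a b}"
proof -
  have cont: "continuous_on UNIV (\<lambda>z. upd_entry x i j z i' k)" for i' k
    using field_differentiable_upd_entry
    by (intro continuous_at_imp_continuous_on ballI field_differentiable_imp_continuous_at)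
  have "{z. upd_entry x i j z \<in> sol_domain n a b} = (\<Inter>k\<in>{1..n}.
      - ((\<lambda>z. upd_entry x i j z 1 k) -` \<real>\<^sub>\<le>\<^sub>0) \<inter>
      {z. cmod (upd_entry x i j z 2 k * a) < cmod (upd_entry x i j z 1 k)} \<inter>
      {z. cmod (upd_entry x i j z 2 k * b) < cmod (upd_entry x i j z 1 k)})"
    unfolding sol_domain_def by auto
  also have "open \<dots>"
    using cont by (intro open_INT ballI open_Int finite_atLeastAtMost open_Compl open_Collect_less
        continuous_closed_vimage closed_nonpos_Reals_complex continuous_intros)
       (auto simp: continuous_on_eq_continuous_at)
  finally show ?thesis .
qed

lemma has_field_derivative_transfer_sol_domain:
  assumes "((\<lambda>z. g (upd_entry x i j z)) has_field_derivative D) (at (x i j))"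
    and "x \<in> sol_domain n a b" and "\<And>y. y \<in> sol_domain n a b \<Longrightarrow> f y = g y"
  shows "((\<lambda>z. f (upd_entry x i j z)) has_field_derivative D) (at (x i j))"
  by (rule has_field_derivative_transform_within_open[OF assms(1) open_sol_domain_line[of x i j n a b]])
     (use assms(2,3) in auto)

definition fd_arg :: "complex \<Rightarrow> (nat \<Rightarrow> nat \<Rightarrow> complex) \<Rightarrow> nat \<Rightarrow> complex" where
  "fd_arg t x k = - x 2 k * t / x 1 k"

lemma fd_arg_in_unit_polydisc:
  assumes x: "x \<in> sol_domain n a b" and t: "t = a \<or> t = b"
  shows "fd_arg t x \<in> unit_polydisc n"
  unfolding unit_polydisc_def
proof (intro CollectI ballI)
  fix k assume k: "k \<in> {1..n}"
  have "cmod (x 2 k * t) < cmod (x 1 k)"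
    using x t k unfolding sol_domain_def by auto
  then show "cmod (fd_arg t x k) < 1"
    using sol_domain_nonzero[OF x k] by (simp add: fd_arg_def norm_mult norm_divide divide_less_eq)
qed

definition ratio_deriv :: "nat \<Rightarrow> nat \<Rightarrow> (nat \<Rightarrow> nat \<Rightarrow> complex) \<Rightarrow> complex" where
  "ratio_deriv i j x = (if i = 1 then x 2 j / (x 1 j)\<^sup>2 else - 1 / x 1 j)"

lemma has_field_derivative_fd_arg:
  assumes "x 1 j \<noteq> 0" "i = 1 \<or> i = 2"
  shows "((\<lambda>z. fd_arg t (upd_entry x i j z) j) has_field_derivative t * ratio_deriv i j x) (at (x i j))"
  using assms(2)
proof
  assume i: "i = 1"
  then have "(\<lambda>z. fd_arg t (upd_entry x i j z) j) = (\<lambda>z. - x 2 j * t / z)"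
    by (auto simp: fd_arg_def upd_entry_apply)
  with i assms(1) show ?thesis
    by (auto intro!: derivative_eq_intros simp: ratio_deriv_def power2_eq_square field_simps)
next
  assume i: "i = 2"
  then have "(\<lambda>z. fd_arg t (upd_entry x i j z) j) = (\<lambda>z. - z * t / x 1 j)"
    by (auto simp: fd_arg_def upd_entry_apply)
  with i assms(1) show ?thesis
    by (auto intro!: derivative_eq_intros simp: ratio_deriv_def field_simps)
qed

lemma has_field_derivative_mseries_fd_arg:
  assumes "polydisc_summable n C" "fd_arg t x \<in> unit_polydisc n" "x 1 j \<noteq> 0" "i = 1 \<or> i = 2"
    and "j \<in> {1..n}"
  shows "((\<lambda>z. mseries n C (fd_arg t (upd_entry x i j z)))
           has_field_derivative t * ratio_deriv i j x * mseries n (coeff_deriv j C) (fd_arg t x)) (at (x i j))"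
proof -
  have "((\<lambda>w. mseries n C ((fd_arg t x)(j := w))) has_field_derivative mseries n (coeff_deriv j C) (fd_arg t x))
          (at (fd_arg t (upd_entry x i j (x i j)) j))"
    using has_field_derivative_mseries[OF assms(1,2,5)] by simp
  then have "((\<lambda>z. mseries n C ((fd_arg t x)(j := fd_arg t (upd_entry x i j z) j))) has_field_derivative
               mseries n (coeff_deriv j C) (fd_arg t x) * (t * ratio_deriv i j x)) (at (x i j))"
    by (rule DERIV_chain2) (rule has_field_derivative_fd_arg[where x = x and j = j, OF assms(3,4)])
  moreover have "fd_arg t (upd_entry x i j z) = (fd_arg t x)(j := fd_arg t (upd_entry x i j z) j)" for z
    by (rule ext) (simp add: fd_arg_def upd_entry_apply)
  ultimately show ?thesis
    by (simp add: mult_ac)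
qed

definition prefactor :: "nat \<Rightarrow> (nat \<Rightarrow> complex) \<Rightarrow> (nat \<Rightarrow> nat \<Rightarrow> complex) \<Rightarrow> complex" where
  "prefactor n \<alpha> x = (\<Prod>k=1..n. x 1 k powr \<alpha> k)"

definition prefactor_deriv ::
  "nat \<Rightarrow> (nat \<Rightarrow> complex) \<Rightarrow> nat \<Rightarrow> nat \<Rightarrow> (nat \<Rightarrow> nat \<Rightarrow> complex) \<Rightarrow> complex" where
  "prefactor_deriv n \<alpha> i j x = (if i = 1 then \<alpha> j / x 1 j * prefactor n \<alpha> x else 0)"

lemma has_field_derivative_prefactor:
  assumes x: "x \<in> sol_domain n a b" and i: "i = 1 \<or> i = 2" and j: "j \<in> {1..n}"
  shows "((\<lambda>z. prefactor n \<alpha> (upd_entry x i j z)) has_field_derivative prefactor_deriv n \<alpha> i j x) (at (x i j))"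
proof -
  define R where "R = (\<Prod>k\<in>{1..n}-{j}. x 1 k powr \<alpha> k)"
  have split: "prefactor n \<alpha> (upd_entry x i j z) = upd_entry x i j z 1 j powr \<alpha> j * R" for z
    unfolding prefactor_def R_def using j
    by (subst prod.remove[of _ j]) (auto simp: upd_entry_apply intro!: prod.cong)
  from i show ?thesis
  proof
    assume i: "i = 1"
    have "((\<lambda>z. z powr \<alpha> j * R) has_field_derivative \<alpha> j * x 1 j powr (\<alpha> j - 1) * R) (at (x 1 j))"
      using sol_domain_not_nonpos[OF x j] by (intro DERIV_cmult_right has_field_derivative_powr)
    moreover have "\<alpha> j * x 1 j powr (\<alpha> j - 1) * R = prefactor_deriv n \<alpha> i j x"
      unfolding prefactor_deriv_def using i split[of "x 1 j"] sol_domain_nonzero[OF x j]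
      by (simp add: powr_diff upd_entry_apply)
    moreover have "(\<lambda>z. prefactor n \<alpha> (upd_entry x i j z)) = (\<lambda>z. z powr \<alpha> j * R)"
      unfolding split using i by (simp add: upd_entry_apply)
    ultimately show ?thesis
      using i by simp
  next
    assume "i = 2"
    then show ?thesis
      unfolding split prefactor_deriv_def by (simp add: upd_entry_apply)
  qed
qed

definition endpoint_diff ::
  "nat \<Rightarrow> ((nat \<Rightarrow> nat) \<Rightarrow> complex) \<Rightarrow> nat \<Rightarrow> complex \<Rightarrow> complex \<Rightarrow> complex \<Rightarrow> (nat \<Rightarrow> nat \<Rightarrow> complex) \<Rightarrow> complex" where
  "endpoint_diff n C p a b \<gamma> x =
     b powr (\<gamma> + 1) / (\<gamma> + 1) * b ^ p * mseries n C (fd_arg b x)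
   - a powr (\<gamma> + 1) / (\<gamma> + 1) * a ^ p * mseries n C (fd_arg a x)"

lemma has_field_derivative_endpoint_diff:
  assumes C: "polydisc_summable n C" and x: "x \<in> sol_domain n a b" and i: "i = 1 \<or> i = 2"
    and j: "j \<in> {1..n}"
  shows "((\<lambda>z. endpoint_diff n C p a b \<gamma> (upd_entry x i j z))
           has_field_derivative ratio_deriv i j x * endpoint_diff n (coeff_deriv j C) (Suc p) a b \<gamma> x)
         (at (x i j))"
proof -
  have "((\<lambda>z. mseries n C (fd_arg t (upd_entry x i j z)))
          has_field_derivative t * ratio_deriv i j x * mseries n (coeff_deriv j C) (fd_arg t x)) (at (x i j))"
    if "t = a \<or> t = b" for t
    using that by (intro has_field_derivative_mseries_fd_arg C fd_arg_in_unit_polydisc[OF x]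
        sol_domain_nonzero[OF x j] i j)
  then have "((\<lambda>z. endpoint_diff n C p a b \<gamma> (upd_entry x i j z)) has_field_derivative
       b powr (\<gamma> + 1) / (\<gamma> + 1) * b ^ p * (b * ratio_deriv i j x * mseries n (coeff_deriv j C) (fd_arg b x))
     - a powr (\<gamma> + 1) / (\<gamma> + 1) * a ^ p * (a * ratio_deriv i j x * mseries n (coeff_deriv j C) (fd_arg a x)))
       (at (x i j))"
    unfolding endpoint_diff_def by (intro DERIV_diff DERIV_cmult) auto
  then show ?thesis
    unfolding endpoint_diff_def by (simp add: algebra_simps)
qed

lemma F_series_eq: "F_series n \<alpha> \<gamma> a b x = prefactor n \<alpha> x * endpoint_diff n (fd_coeff n \<alpha> \<gamma>) 0 a b \<gamma> x"
  unfolding F_series_def endpoint_diff_def prefactor_def lauricella_FD_eq_mseries[symmetric] fd_arg_def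
  by simp

definition F_partial ::
  "nat \<Rightarrow> (nat \<Rightarrow> complex) \<Rightarrow> complex \<Rightarrow> complex \<Rightarrow> complex \<Rightarrow> nat \<Rightarrow> nat \<Rightarrow> (nat \<Rightarrow> nat \<Rightarrow> complex) \<Rightarrow> complex" where
  "F_partial n \<alpha> \<gamma> a b i j x =
     prefactor_deriv n \<alpha> i j x * endpoint_diff n (fd_coeff n \<alpha> \<gamma>) 0 a b \<gamma> x
   + prefactor n \<alpha> x * (ratio_deriv i j x * endpoint_diff n (coeff_deriv j (fd_coeff n \<alpha> \<gamma>)) 1 a b \<gamma> x)"

lemma has_field_derivative_F_series:
  assumes \<gamma>: "\<forall>k::nat. \<gamma> \<noteq> - of_nat (Suc k)" and x: "x \<in> sol_domain n a b"
    and i: "i = 1 \<or> i = 2" and j: "j \<in> {1..n}"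
  shows "((\<lambda>z. F_series n \<alpha> \<gamma> a b (upd_entry x i j z)) has_field_derivative F_partial n \<alpha> \<gamma> a b i j x)
           (at (x i j))"
  unfolding F_series_eq F_partial_def
  using has_field_derivative_prefactor[OF x i j]
    has_field_derivative_endpoint_diff[OF polydisc_summable_fd_coeff[OF \<gamma>] x i j]
  by (auto intro!: derivative_eq_intros)

lemma partial_x_F_series:
  assumes \<gamma>: "\<forall>k::nat. \<gamma> \<noteq> - of_nat (Suc k)" and x: "x \<in> sol_domain n a b"
    and i: "i = 1 \<or> i = 2" and j: "j \<in> {1..n}"
  shows "partial_x i j (F_series n \<alpha> \<gamma> a b) x = F_partial n \<alpha> \<gamma> a b i j x"
  unfolding partial_x_eq_deriv_upd_entry by (rule DERIV_imp_deriv[OF has_field_derivative_F_series[OF assms]])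

definition separately_differentiable ::
  "nat \<Rightarrow> complex \<Rightarrow> complex \<Rightarrow> ((nat \<Rightarrow> nat \<Rightarrow> complex) \<Rightarrow> complex) \<Rightarrow> bool" where
  "separately_differentiable n a b f \<longleftrightarrow>
     (\<forall>x\<in>sol_domain n a b. \<forall>i\<in>{1,2}. \<forall>j\<in>{1..n}.
        (\<lambda>z. f (upd_entry x i j z)) field_differentiable at (x i j))"

lemma separately_differentiable_const: "separately_differentiable n a b (\<lambda>x. c)"
  unfolding separately_differentiable_def by simp

lemma separately_differentiable_entry: "separately_differentiable n a b (\<lambda>x. x i' k)"
  unfolding separately_differentiable_def using field_differentiable_upd_entry by auto

lemma separately_differentiable_add:
  "separately_differentiable n a b f \<Longrightarrow> separately_differentiable n a b g \<Longrightarrow>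
     separately_differentiable n a b (\<lambda>x. f x + g x)"
  unfolding separately_differentiable_def by (auto intro!: field_differentiable_add)

lemma separately_differentiable_mult:
  "separately_differentiable n a b f \<Longrightarrow> separately_differentiable n a b g \<Longrightarrow>
     separately_differentiable n a b (\<lambda>x. f x * g x)"
  unfolding separately_differentiable_def by (auto intro!: field_differentiable_mult)

lemma separately_differentiable_inverse_entry:
  assumes "k \<in> {1..n}"
  shows "separately_differentiable n a b (\<lambda>x. inverse (x 1 k))"
  unfolding separately_differentiable_def
proof (intro ballI)
  fix x i j assume x: "x \<in> sol_domain n a b"
  have "upd_entry x i j (x i j) 1 k \<noteq> 0"
    using sol_domain_nonzero[OF x assms] by simp
  then show "(\<lambda>z. inverse (upd_entry x i j z 1 k)) field_differentiable at (x i j)"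
    by (intro field_differentiable_inverse field_differentiable_upd_entry)
qed

lemma separately_differentiable_ratio_deriv:
  assumes "j \<in> {1..n}"
  shows "separately_differentiable n a b (ratio_deriv i j)"
proof -
  note inv = separately_differentiable_inverse_entry[OF assms]
  show ?thesis
  proof (cases "i = 1")
    case True
    then have "ratio_deriv i j = (\<lambda>x. x 2 j * (inverse (x 1 j) * inverse (x 1 j)))"
      by (auto simp: ratio_deriv_def power2_eq_square divide_inverse)
    then show ?thesis
      by (simp only:) (intro separately_differentiable_mult separately_differentiable_entry inv)
  next
    case False
    then have "ratio_deriv i j = (\<lambda>x. (- 1) * inverse (x 1 j))"
      by (auto simp: ratio_deriv_def divide_inverse)
    then show ?thesis
      by (simp only:) (intro separately_differentiable_mult separately_differentiable_const inv)
  qed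
qed

lemma separately_differentiable_prefactor: "separately_differentiable n a b (prefactor n \<alpha>)"
  unfolding separately_differentiable_def field_differentiable_def
  using has_field_derivative_prefactor by blast

lemma separately_differentiable_prefactor_deriv:
  assumes "j \<in> {1..n}"
  shows "separately_differentiable n a b (prefactor_deriv n \<alpha> i j)"
proof (cases "i = 1")
  case True
  then have "prefactor_deriv n \<alpha> i j = (\<lambda>x. \<alpha> j * inverse (x 1 j) * prefactor n \<alpha> x)"
    by (auto simp: prefactor_deriv_def divide_inverse)
  then show ?thesis
    by (simp only:) (intro separately_differentiable_mult separately_differentiable_const
        separately_differentiable_prefactor separately_differentiable_inverse_entry[OF assms])
next
  case False
  then have "prefactor_deriv n \<alpha> i j = (\<lambda>x. 0)"
    by (auto simp: prefactor_deriv_def)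
  then show ?thesis
    by (simp add: separately_differentiable_const)
qed

lemma separately_differentiable_endpoint_diff:
  "polydisc_summable n C \<Longrightarrow> separately_differentiable n a b (endpoint_diff n C p a b \<gamma>)"
  unfolding separately_differentiable_def field_differentiable_def
  using has_field_derivative_endpoint_diff by blast

lemma separately_differentiable_F_partial:
  assumes "\<forall>k::nat. \<gamma> \<noteq> - of_nat (Suc k)" "j \<in> {1..n}"
  shows "separately_differentiable n a b (F_partial n \<alpha> \<gamma> a b i j)"
  unfolding F_partial_def using assms
  by (intro separately_differentiable_add separately_differentiable_mult
      separately_differentiable_prefactor_deriv separately_differentiable_endpoint_diff
      separately_differentiable_prefactor separately_differentiable_ratio_deriv
      polydisc_summable_fd_coeff polydisc_summable_coeff_deriv)

lemma F_series_differentiable: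
  assumes \<gamma>: "\<forall>k::nat. \<gamma> \<noteq> - of_nat (Suc k)" and x: "x \<in> sol_domain n a b"
    and i: "i = 1 \<or> i = 2" and j: "j \<in> {1..n}"
  shows "(\<lambda>z. F_series n \<alpha> \<gamma> a b (upd_entry x i j z)) field_differentiable at (x i j)"
  using has_field_derivative_F_series[OF \<gamma> x i j] unfolding field_differentiable_def by blast

lemma partial_x_F_series_differentiable:
  assumes \<gamma>: "\<forall>k::nat. \<gamma> \<noteq> - of_nat (Suc k)" and x: "x \<in> sol_domain n a b"
    and i: "i = 1 \<or> i = 2" and j: "j \<in> {1..n}" and i': "i' = 1 \<or> i' = 2" and j': "j' \<in> {1..n}"
  shows "(\<lambda>z. partial_x i' j' (F_series n \<alpha> \<gamma> a b) (upd_entry x i j z)) field_differentiable at (x i j)"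
proof -
  have "(\<lambda>z. F_partial n \<alpha> \<gamma> a b i' j' (upd_entry x i j z)) field_differentiable at (x i j)"
    using separately_differentiable_F_partial[OF \<gamma> j', of a b \<alpha> i'] x i j
    unfolding separately_differentiable_def by auto
  then obtain D where "((\<lambda>z. F_partial n \<alpha> \<gamma> a b i' j' (upd_entry x i j z)) has_field_derivative D) (at (x i j))"
    unfolding field_differentiable_def by blast
  then have "((\<lambda>z. partial_x i' j' (F_series n \<alpha> \<gamma> a b) (upd_entry x i j z)) has_field_derivative D) (at (x i j))"
    by (rule has_field_derivative_transfer_sol_domain[OF _ x]) (rule partial_x_F_series[OF \<gamma> _ i' j'])
  then show ?thesis
    unfolding field_differentiable_def by blast
qed

lemma F_series_homogeneity:
  assumes \<gamma>: "\<forall>k::nat. \<gamma> \<noteq> - of_nat (Suc k)" and x: "x \<in> sol_domain n a b" and i: "i \<in> {1..n}"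
  shows "theta_x 1 i (F_series n \<alpha> \<gamma> a b) x + theta_x 2 i (F_series n \<alpha> \<gamma> a b) x
         - \<alpha> i * F_series n \<alpha> \<gamma> a b x = 0"
proof -
  have "partial_x 1 i (F_series n \<alpha> \<gamma> a b) x = F_partial n \<alpha> \<gamma> a b 1 i x"
    and "partial_x 2 i (F_series n \<alpha> \<gamma> a b) x = F_partial n \<alpha> \<gamma> a b 2 i x"
    by (simp_all add: partial_x_F_series[OF \<gamma> x _ i])
  note partials = this
  show ?thesis
    using sol_domain_nonzero[OF x i]
    unfolding theta_x_def partials F_partial_def prefactor_deriv_def ratio_deriv_def F_series_eq
    by (simp add: field_simps power2_eq_square)
qed

lemma F_series_euler_equation:
  assumes \<gamma>: "\<forall>k::nat. \<gamma> \<noteq> - of_nat (Suc k)" and x: "x \<in> sol_domain n a b"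
  shows "(\<Sum>i=1..n. theta_x 2 i (F_series n \<alpha> \<gamma> a b) x) + (\<gamma> + 1) * F_series n \<alpha> \<gamma> a b x
         = g_fun n \<alpha> \<gamma> b x - g_fun n \<alpha> \<gamma> a x"
proof -
  let ?C = "fd_coeff n \<alpha> \<gamma>" and ?F = "F_series n \<alpha> \<gamma> a b"
  define S where "S t = t powr (\<gamma> + 1) / (\<gamma> + 1) *
    ((\<Sum>i=1..n. fd_arg t x i * mseries n (coeff_deriv i ?C) (fd_arg t x)) + (\<gamma> + 1) * mseries n ?C (fd_arg t x))"
    for t
  have "\<gamma> + 1 \<noteq> 0"
  proof
    assume "\<gamma> + 1 = 0"
    then have "\<gamma> = - of_nat (Suc 0)"
      by (simp add: eq_neg_iff_add_eq_0)
    with \<gamma> show False by blast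
  qed
  have theta: "theta_x 2 i ?F x = prefactor n \<alpha> x *
      (b powr (\<gamma> + 1) / (\<gamma> + 1) * (fd_arg b x i * mseries n (coeff_deriv i ?C) (fd_arg b x))
     - a powr (\<gamma> + 1) / (\<gamma> + 1) * (fd_arg a x i * mseries n (coeff_deriv i ?C) (fd_arg a x)))"
    if i: "i \<in> {1..n}" for i
    using sol_domain_nonzero[OF x i]
    unfolding theta_x_def partial_x_F_series[OF \<gamma> x _ i, of 2, simplified] F_partial_def
    by (simp add: prefactor_deriv_def ratio_deriv_def endpoint_diff_def fd_arg_def algebra_simps)
  have F_eq: "?F x = prefactor n \<alpha> x * (b powr (\<gamma> + 1) / (\<gamma> + 1) * mseries n ?C (fd_arg b x)
                                   - a powr (\<gamma> + 1) / (\<gamma> + 1) * mseries n ?C (fd_arg a x))"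
    by (simp add: F_series_eq endpoint_diff_def)
  have sum_theta: "(\<Sum>i=1..n. theta_x 2 i ?F x) = (\<Sum>i=1..n. prefactor n \<alpha> x *
      (b powr (\<gamma> + 1) / (\<gamma> + 1) * (fd_arg b x i * mseries n (coeff_deriv i ?C) (fd_arg b x))
     - a powr (\<gamma> + 1) / (\<gamma> + 1) * (fd_arg a x i * mseries n (coeff_deriv i ?C) (fd_arg a x))))"
    by (rule sum.cong) (simp_all add: theta)
  have "(\<Sum>i=1..n. theta_x 2 i ?F x) + (\<gamma> + 1) * ?F x = prefactor n \<alpha> x * (S b - S a)"
    unfolding S_def F_eq sum_theta by (simp add: sum_subtractf sum_distrib_left algebra_simps add_divide_distrib)
  also have "\<dots> = prefactor n \<alpha> x * (b powr (\<gamma> + 1) * (\<Prod>k=1..n. (1 - fd_arg b x k) powr \<alpha> k))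
                   - prefactor n \<alpha> x * (a powr (\<gamma> + 1) * (\<Prod>k=1..n. (1 - fd_arg a x k) powr \<alpha> k))"
    unfolding S_def lauricella_euler[OF \<gamma> fd_arg_in_unit_polydisc[OF x disjI1[OF refl]]]
      lauricella_euler[OF \<gamma> fd_arg_in_unit_polydisc[OF x disjI2[OF refl]]]
    using \<open>\<gamma> + 1 \<noteq> 0\<close> by (simp add: right_diff_distrib)
  also have "\<dots> = g_fun n \<alpha> \<gamma> b x - g_fun n \<alpha> \<gamma> a x"
    unfolding g_fun_def prefactor_def fd_arg_def by (simp add: prod.distrib algebra_simps)
  finally show ?thesis .
qed

lemma has_field_derivative_F_partial_2:
  assumes \<gamma>: "\<forall>k::nat. \<gamma> \<noteq> - of_nat (Suc k)" and x: "x \<in> sol_domain n a b"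
    and i: "i \<in> {1..n}" and j: "j \<in> {1..n}" and "i \<noteq> j"
  shows "((\<lambda>z. F_partial n \<alpha> \<gamma> a b 2 j (upd_entry x 1 i z)) has_field_derivative
           prefactor_deriv n \<alpha> 1 i x * (ratio_deriv 2 j x * endpoint_diff n (coeff_deriv j (fd_coeff n \<alpha> \<gamma>)) 1 a b \<gamma> x)
         + prefactor n \<alpha> x * (ratio_deriv 2 j x *
             (ratio_deriv 1 i x * endpoint_diff n (coeff_deriv i (coeff_deriv j (fd_coeff n \<alpha> \<gamma>))) 2 a b \<gamma> x)))
         (at (x 1 i))"
proof -
  let ?E = "endpoint_diff n (coeff_deriv j (fd_coeff n \<alpha> \<gamma>)) 1 a b \<gamma>"
  have "(\<lambda>z. F_partial n \<alpha> \<gamma> a b 2 j (upd_entry x 1 i z))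
        = (\<lambda>z. prefactor n \<alpha> (upd_entry x 1 i z) * (ratio_deriv 2 j x * ?E (upd_entry x 1 i z)))"
    using \<open>i \<noteq> j\<close> by (auto simp: F_partial_def prefactor_deriv_def ratio_deriv_def upd_entry_apply)
  moreover have "((\<lambda>z. ?E (upd_entry x 1 i z)) has_field_derivative
      ratio_deriv 1 i x * endpoint_diff n (coeff_deriv i (coeff_deriv j (fd_coeff n \<alpha> \<gamma>))) 2 a b \<gamma> x) (at (x 1 i))"
    using has_field_derivative_endpoint_diff[OF polydisc_summable_coeff_deriv[OF polydisc_summable_fd_coeff[OF \<gamma>] j]
        x _ i, of 1] by (simp add: numeral_2_eq_2)
  ultimately show ?thesis
    using has_field_derivative_prefactor[OF x _ i, of 1 \<alpha>]
    by (auto intro!: derivative_eq_intros simp: algebra_simps)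
qed

lemma endpoint_diff_contiguity:
  assumes \<gamma>: "\<forall>k::nat. \<gamma> \<noteq> - of_nat (Suc k)" and x: "x \<in> sol_domain n a b"
    and i: "i \<in> {1..n}" and j: "j \<in> {1..n}" and ij: "i \<noteq> j"
  shows "\<alpha> i * endpoint_diff n (coeff_deriv j (fd_coeff n \<alpha> \<gamma>)) 1 a b \<gamma> x
         - \<alpha> j * endpoint_diff n (coeff_deriv i (fd_coeff n \<alpha> \<gamma>)) 1 a b \<gamma> x
       = (x 2 j / x 1 j - x 2 i / x 1 i) * endpoint_diff n (coeff_deriv i (coeff_deriv j (fd_coeff n \<alpha> \<gamma>))) 2 a b \<gamma> x"
proof -
  let ?C = "fd_coeff n \<alpha> \<gamma>"
  define w where "w = x 2 j / x 1 j - x 2 i / x 1 i"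
  have contiguity: "\<alpha> i * mseries n (coeff_deriv j ?C) (fd_arg t x) - \<alpha> j * mseries n (coeff_deriv i ?C) (fd_arg t x)
      = t * w * mseries n (coeff_deriv i (coeff_deriv j ?C)) (fd_arg t x)" if "t = a \<or> t = b" for t
  proof -
    have "fd_arg t x i - fd_arg t x j = t * w"
      unfolding fd_arg_def w_def by (simp add: algebra_simps)
    then show ?thesis
      using lauricella_contiguity[OF \<gamma> fd_arg_in_unit_polydisc[OF x that] i j ij] by simp
  qed
  have "\<alpha> i * endpoint_diff n (coeff_deriv j ?C) 1 a b \<gamma> x - \<alpha> j * endpoint_diff n (coeff_deriv i ?C) 1 a b \<gamma> x
     = b powr (\<gamma> + 1) / (\<gamma> + 1) * b *
         (\<alpha> i * mseries n (coeff_deriv j ?C) (fd_arg b x) - \<alpha> j * mseries n (coeff_deriv i ?C) (fd_arg b x))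
     - a powr (\<gamma> + 1) / (\<gamma> + 1) * a *
         (\<alpha> i * mseries n (coeff_deriv j ?C) (fd_arg a x) - \<alpha> j * mseries n (coeff_deriv i ?C) (fd_arg a x))"
    unfolding endpoint_diff_def by (simp add: algebra_simps)
  also have "\<dots> = w * endpoint_diff n (coeff_deriv i (coeff_deriv j ?C)) 2 a b \<gamma> x"
    unfolding contiguity[OF disjI1[OF refl]] contiguity[OF disjI2[OF refl]] endpoint_diff_def
    by (simp add: algebra_simps power2_eq_square)
  finally show ?thesis
    unfolding w_def .
qed

lemma F_series_rank_two_equation:
  assumes \<gamma>: "\<forall>k::nat. \<gamma> \<noteq> - of_nat (Suc k)" and x: "x \<in> sol_domain n a b"
    and i: "i \<in> {1..n}" and j: "j \<in> {1..n}" and ij: "i \<noteq> j"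
  shows "partial_x 1 i (partial_x 2 j (F_series n \<alpha> \<gamma> a b)) x
       - partial_x 1 j (partial_x 2 i (F_series n \<alpha> \<gamma> a b)) x = 0"
proof -
  let ?F = "F_series n \<alpha> \<gamma> a b" and ?C = "fd_coeff n \<alpha> \<gamma>"
  have mixed: "partial_x 1 i (partial_x 2 j ?F) x =
      prefactor_deriv n \<alpha> 1 i x * (ratio_deriv 2 j x * endpoint_diff n (coeff_deriv j ?C) 1 a b \<gamma> x)
    + prefactor n \<alpha> x * (ratio_deriv 2 j x * (ratio_deriv 1 i x * endpoint_diff n (coeff_deriv i (coeff_deriv j ?C)) 2 a b \<gamma> x))"
    if "i \<in> {1..n}" "j \<in> {1..n}" "i \<noteq> j" for i j
    unfolding partial_x_eq_deriv_upd_entry[of 1 i]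
    by (rule DERIV_imp_deriv, rule has_field_derivative_transfer_sol_domain[OF
          has_field_derivative_F_partial_2[OF \<gamma> x that] x])
       (rule partial_x_F_series[OF \<gamma> _ _ that(2)], auto)
  have "partial_x 1 i (partial_x 2 j ?F) x - partial_x 1 j (partial_x 2 i ?F) x
     = - prefactor n \<alpha> x / (x 1 i * x 1 j) *
         ((\<alpha> i * endpoint_diff n (coeff_deriv j ?C) 1 a b \<gamma> x - \<alpha> j * endpoint_diff n (coeff_deriv i ?C) 1 a b \<gamma> x)
        - (x 2 j / x 1 j - x 2 i / x 1 i) * endpoint_diff n (coeff_deriv i (coeff_deriv j ?C)) 2 a b \<gamma> x)"
    using sol_domain_nonzero[OF x i] sol_domain_nonzero[OF x j]
    unfolding mixed[OF i j ij] mixed[OF j i ij[symmetric]] coeff_deriv_commute[OF ij] prefactor_deriv_def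
      ratio_deriv_def
    by (simp add: field_simps power2_eq_square)
  also have "\<dots> = 0"
    using endpoint_diff_contiguity[OF \<gamma> x i j ij] by simp
  finally show ?thesis .
qed

theorem theorem1:
  fixes n :: nat and a b \<gamma> :: complex and \<alpha> :: "nat \<Rightarrow> complex"
  assumes "n \<ge> 1"
    and "\<forall>k::nat. \<gamma> \<noteq> - of_nat (Suc k)"
  defines "U \<equiv> {x :: nat \<Rightarrow> nat \<Rightarrow> complex. \<forall>k\<in>{1..n}. x 1 k \<notin> \<real>\<^sub>\<le>\<^sub>0
                  \<and> cmod (x 2 k * a) < cmod (x 1 k) \<and> cmod (x 2 k * b) < cmod (x 1 k)}"
    and "F \<equiv> F_series n \<alpha> \<gamma> a b"
  shows "(\<forall>x\<in>U. \<forall>i\<in>{1,2}. \<forall>j\<in>{1..n}.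
            (\<lambda>z. F (x(i := (x i)(j := z)))) field_differentiable at (x i j)
          \<and> (\<forall>i'\<in>{1,2}. \<forall>j'\<in>{1..n}.
               (\<lambda>z. partial_x i' j' F (x(i := (x i)(j := z)))) field_differentiable at (x i j)))
       \<and> (\<forall>x\<in>U. \<forall>i\<in>{1..n}. theta_x 1 i F x + theta_x 2 i F x - \<alpha> i * F x = 0)
       \<and> (\<forall>x\<in>U. (\<Sum>i=1..n. theta_x 2 i F x) + (\<gamma> + 1) * F x
                   = g_fun n \<alpha> \<gamma> b x - g_fun n \<alpha> \<gamma> a x)
       \<and> (\<forall>x\<in>U. \<forall>i j. 1 \<le> i \<and> i < j \<and> j \<le> n \<longrightarrow>
            partial_x 1 i (partial_x 2 j F) x - partial_x 1 j (partial_x 2 i F) x = 0)"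
proof -
  note \<gamma> = assms(2)
  have U: "U = sol_domain n a b"
    unfolding U_def sol_domain_def ..
  show ?thesis
    unfolding U F_def upd_entry_def[symmetric]
  proof (intro conjI ballI allI impI)
    fix x and i j :: nat assume "x \<in> sol_domain n a b" "i \<in> {1, 2}" "j \<in> {1..n}"
    then show "(\<lambda>z. F_series n \<alpha> \<gamma> a b (upd_entry x i j z)) field_differentiable at (x i j)"
      by (intro F_series_differentiable[OF \<gamma>]) auto
  next
    fix x and i j i' j' :: nat assume "x \<in> sol_domain n a b" "i \<in> {1, 2}" "j \<in> {1..n}" "i' \<in> {1, 2}" "j' \<in> {1..n}"
    then show "(\<lambda>z. partial_x i' j' (F_series n \<alpha> \<gamma> a b) (upd_entry x i j z)) field_differentiable at (x i j)"
      by (intro partial_x_F_series_differentiable[OF \<gamma>]) auto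
  next
    fix x and i :: nat assume "x \<in> sol_domain n a b" "i \<in> {1..n}"
    then show "theta_x 1 i (F_series n \<alpha> \<gamma> a b) x + theta_x 2 i (F_series n \<alpha> \<gamma> a b) x
               - \<alpha> i * F_series n \<alpha> \<gamma> a b x = 0"
      by (rule F_series_homogeneity[OF \<gamma>])
  next
    fix x assume "x \<in> sol_domain n a b"
    then show "(\<Sum>i=1..n. theta_x 2 i (F_series n \<alpha> \<gamma> a b) x) + (\<gamma> + 1) * F_series n \<alpha> \<gamma> a b x
               = g_fun n \<alpha> \<gamma> b x - g_fun n \<alpha> \<gamma> a x"
      by (rule F_series_euler_equation[OF \<gamma>])
  next
    fix x and i j :: nat assume "x \<in> sol_domain n a b" "1 \<le> i \<and> i < j \<and> j \<le> n"
    then show "partial_x 1 i (partial_x 2 j (F_series n \<alpha> \<gamma> a b)) x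
               - partial_x 1 j (partial_x 2 i (F_series n \<alpha> \<gamma> a b)) x = 0"
      by (intro F_series_rank_two_equation[OF \<gamma>]) auto
  qed
qed

end
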